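(* Let $\mathcal{P}$ be a Prob-solvable loop with program variables $x_1,\ldots,x_m$, and let $M=\prod_{i=1}^m x_i^{\alpha_i}$ be any monomial (with $\alpha_i\in\mathbb{N}$) in the program variables. Then the sequence of expected values $E[M(n)]$, $n\ge 0$, is modeled by C-finite recurrences over E-variables: there is a finite set $\mathcal{S}$ of monomials in $x_1,\ldots,x_m$ containing $M$ such that, for every $N\in\mathcal{S}$, $E[N(n+1)]$ equals a linear combination, with constant coefficients, of the E-variables $E[N'(n)]$, $N'\in\mathcal{S}$, plus a constant. In particular higher-order (and mixed) moments of the program variables satisfy a system of linear recurrences with constant coefficients.
   Context: A Prob-solvable loop consists of an initialization assigning initial values (constants) to program variables $x_1,\ldots,x_m$, followed by a loop \texttt{while true do} whose body updates the variables in order $x_1,\ldots,x_m$ by probabilistic assignments of the form $x_i := a_i x_i + P_i(x_1,\ldots,x_{i-1})$ with probability $p_i$, and $x_i := b_i x_i + Q_i(x_1,\ldots,x_{i-1})$ with probability $1-p_i$, where $a_i,b_i$ are constants, $p_i\in[0,1]$, and $P_i,Q_i$ are polynomials in the already-updated variables $x_1,\ldots,x_{i-1}$ (i.e. their values in the current iteration) whose coefficients are constants or random variables drawn independently (e.g. uniformly from a fixed interval, such as \texttt{rand}$(a,b)$) with known constant moments, independent of the program state. The probabilistic choices in each iteration are independent. For $n\ge 0$, $x_i(n)$ denotes the random variable giving the value of $x_i$ after $n$ loop iterations, and for a monomial $M=\prod x_i^{\alpha_i}$, $M(n)=\prod x_i(n)^{\alpha_i}$. An E-variable is an expression $E[M(n)]$,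 the expected value of a monomial in the program variables at iteration $n$. A C-finite recurrence is a linear recurrence with constant coefficients. *)

theory Defs
  imports "HOL-Probability.Probability"
begin

text \<open>A Prob-solvable loop with program variables x_0, ..., x_(m-1) (0-based).
  A polynomial in the already-updated variables is a finite list of terms;
  each term is (D, alpha): a coefficient drawn from distribution D (a Dirac
  measure for a constant coefficient) times the monomial with exponent vector alpha.\<close>

type_synonym rpoly = "(real measure \<times> (nat \<Rightarrow> nat)) list"

record probloop =
  nvars :: nat
  init  :: "nat \<Rightarrow> real"
  pr    :: "nat \<Rightarrow> real"
  ca    :: "nat \<Rightarrow> real"
  cb    :: "nat \<Rightarrow> real"
  polP  :: "nat \<Rightarrow> rpoly"
  polQ  :: "nat \<Rightarrow> rpoly"

definition pol :: "probloop \<Rightarrow> bool \<Rightarrow> nat \<Rightarrow> rpoly" where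
  "pol L br i = (if br then polP L i else polQ L i)"

definition prob_solvable :: "probloop \<Rightarrow> bool" where
  "prob_solvable L \<longleftrightarrow>
     (\<forall>i < nvars L. 0 \<le> pr L i \<and> pr L i \<le> 1) \<and>
     (\<forall>i < nvars L. \<forall>br k. k < length (pol L br i) \<longrightarrow>
        (\<forall>j. j \<ge> i \<longrightarrow> snd (pol L br i ! k) j = 0) \<and>
        prob_space (fst (pol L br i ! k)) \<and>
        sets (fst (pol L br i ! k)) = sets borel \<and>
        (\<forall>e::nat. integrable (fst (pol L br i ! k)) (\<lambda>x. x ^ e)))"

definition mon_eval :: "nat \<Rightarrow> (nat \<Rightarrow> nat) \<Rightarrow> (nat \<Rightarrow> real) \<Rightarrow> real" where
  "mon_eval m \<alpha> s = (\<Prod>j<m. s j ^ \<alpha> j)"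

definition poly_eval :: "nat \<Rightarrow> rpoly \<Rightarrow> (nat \<Rightarrow> real) \<Rightarrow> (nat \<Rightarrow> real) \<Rightarrow> real" where
  "poly_eval m ps c s = (\<Sum>k<length ps. c k * mon_eval m (snd (ps ! k)) s)"

text \<open>Random sources: B n i \<omega> is the probabilistic choice for x_i in iteration n
  (True = first branch), C n i br k \<omega> is the k-th coefficient of the polynomial
  of branch br of x_i in iteration n.\<close>

fun body :: "probloop \<Rightarrow> (nat \<Rightarrow> nat \<Rightarrow> 'a \<Rightarrow> bool) \<Rightarrow> (nat \<Rightarrow> nat \<Rightarrow> bool \<Rightarrow> nat \<Rightarrow> 'a \<Rightarrow> real)
    \<Rightarrow> nat \<Rightarrow> 'a \<Rightarrow> (nat \<Rightarrow> real) \<Rightarrow> nat \<Rightarrow> (nat \<Rightarrow> real)" where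
  "body L B C n \<omega> s 0 = s"
| "body L B C n \<omega> s (Suc i) =
     (let t = body L B C n \<omega> s i in
      t(i := (if B n i \<omega>
              then ca L i * t i + poly_eval (nvars L) (polP L i) (\<lambda>k. C n i True k \<omega>) t
              else cb L i * t i + poly_eval (nvars L) (polQ L i) (\<lambda>k. C n i False k \<omega>) t)))"

fun loop_state :: "probloop \<Rightarrow> (nat \<Rightarrow> nat \<Rightarrow> 'a \<Rightarrow> bool) \<Rightarrow> (nat \<Rightarrow> nat \<Rightarrow> bool \<Rightarrow> nat \<Rightarrow> 'a \<Rightarrow> real)
    \<Rightarrow> nat \<Rightarrow> 'a \<Rightarrow> (nat \<Rightarrow> real)" where
  "loop_state L B C 0 \<omega> = init L"
| "loop_state L B C (Suc n) \<omega> = body L B C n \<omega> (loop_state L B C n \<omega>) (nvars L)"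

datatype ridx = Ch nat nat | Cf nat nat bool nat

definition src :: "(nat \<Rightarrow> nat \<Rightarrow> 'a \<Rightarrow> bool) \<Rightarrow> (nat \<Rightarrow> nat \<Rightarrow> bool \<Rightarrow> nat \<Rightarrow> 'a \<Rightarrow> real)
    \<Rightarrow> ridx \<Rightarrow> 'a \<Rightarrow> real" where
  "src B C r = (case r of Ch n i \<Rightarrow> (\<lambda>\<omega>. of_bool (B n i \<omega>)) | Cf n i br k \<Rightarrow> C n i br k)"

definition src_idx :: "probloop \<Rightarrow> ridx set" where
  "src_idx L = {Ch n i | n i. i < nvars L} \<union>
               {Cf n i br k | n i br k. i < nvars L \<and> k < length (pol L br i)}"

definition loop_sources :: "'a measure \<Rightarrow> probloop \<Rightarrow> (nat \<Rightarrow> nat \<Rightarrow> 'a \<Rightarrow> bool)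
    \<Rightarrow> (nat \<Rightarrow> nat \<Rightarrow> bool \<Rightarrow> nat \<Rightarrow> 'a \<Rightarrow> real) \<Rightarrow> bool" where
  "loop_sources M L B C \<longleftrightarrow>
     prob_space.indep_vars M (\<lambda>_. borel) (src B C) (src_idx L) \<and>
     (\<forall>n i. i < nvars L \<longrightarrow> measure M {\<omega> \<in> space M. B n i \<omega>} = pr L i) \<and>
     (\<forall>n i br k. i < nvars L \<and> k < length (pol L br i) \<longrightarrow>
        distr M borel (C n i br k) = fst (pol L br i ! k))"

definition Evar :: "'a measure \<Rightarrow> probloop \<Rightarrow> (nat \<Rightarrow> nat \<Rightarrow> 'a \<Rightarrow> bool)
    \<Rightarrow> (nat \<Rightarrow> nat \<Rightarrow> bool \<Rightarrow> nat \<Rightarrow> 'a \<Rightarrow> real) \<Rightarrow> (nat \<Rightarrow> nat) \<Rightarrow> nat \<Rightarrow> real" where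
  "Evar M L B C \<beta> n = (\<integral>\<omega>. mon_eval (nvars L) \<beta> (loop_state L B C n \<omega>) \<partial>M)"

end

theory Submission
  imports Defs
begin

text \<open>
  Expand one loop iteration symbolically: after the body, every monomial in the program variables
  is a polynomial in their values before the iteration, whose coefficients are monomials in the
  fresh random choices and random coefficients of that iteration. These fresh sources are
  independent of the earlier state, so taking expectations replaces every source monomial by its
  constant moment, and E[N(n+1)] becomes a fixed linear combination of the E[N'(n)].
  The monomials N' that arise stay in a finite set: give x_j the weight (D+1)^j, where D bounds
  the degrees of all P_i and Q_i. The update of x_i is linear in x_i and adds monomials of degree
  at most D in x_1, ..., x_(i-1), which weigh no more than x_i. So no monomial in the expansion of N
  outweighs N, and the monomials of weight at most that of M form the required set.
\<close>

section \<open>Polynomials in random sources and program variables\<close>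

type_synonym 's mpoly = "(real \<times> ('s \<Rightarrow> nat) \<times> (nat \<Rightarrow> nat)) list"

definition src_monom :: "'s set \<Rightarrow> ('s \<Rightarrow> nat) \<Rightarrow> ('s \<Rightarrow> real) \<Rightarrow> real" where
  "src_monom I g v = (\<Prod>s\<in>I. v s ^ g s)"

definition mpoly_eval :: "'s set \<Rightarrow> nat \<Rightarrow> 's mpoly \<Rightarrow> ('s \<Rightarrow> real) \<Rightarrow> (nat \<Rightarrow> real) \<Rightarrow> real" where
  "mpoly_eval I m p v x = (\<Sum>(c, g, b)\<leftarrow>p. c * src_monom I g v * mon_eval m b x)"

definition mpoly_mult :: "'s mpoly \<Rightarrow> 's mpoly \<Rightarrow> 's mpoly" where
  "mpoly_mult p q = [(c * d, \<lambda>s. g s + h s, \<lambda>j. a j + b j). (c, g, a) \<leftarrow> p, (d, h, b) \<leftarrow> q]"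

definition mpoly_const :: "real \<Rightarrow> 's mpoly" where
  "mpoly_const c = [(c, \<lambda>_. 0, \<lambda>_. 0)]"

definition mpoly_var :: "nat \<Rightarrow> 's mpoly" where
  "mpoly_var j = [(1, \<lambda>_. 0, (\<lambda>_. 0)(j := 1))]"

definition mpoly_src :: "'s \<Rightarrow> 's mpoly" where
  "mpoly_src s = [(1, (\<lambda>_. 0)(s := 1), \<lambda>_. 0)]"

fun mpoly_power :: "'s mpoly \<Rightarrow> nat \<Rightarrow> 's mpoly" where
  "mpoly_power p 0 = mpoly_const 1"
| "mpoly_power p (Suc e) = mpoly_mult p (mpoly_power p e)"

fun mpoly_subst_monom :: "(nat \<Rightarrow> 's mpoly) \<Rightarrow> nat \<Rightarrow> (nat \<Rightarrow> nat) \<Rightarrow> 's mpoly" where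
  "mpoly_subst_monom e 0 a = mpoly_const 1"
| "mpoly_subst_monom e (Suc j) a = mpoly_mult (mpoly_subst_monom e j a) (mpoly_power (e j) (a j))"

lemma src_monom_add: "src_monom I (\<lambda>s. g s + h s) v = src_monom I g v * src_monom I h v"
  by (simp add: src_monom_def power_add prod.distrib)

lemma mon_eval_add: "mon_eval m (\<lambda>j. a j + b j) x = mon_eval m a x * mon_eval m b x"
  by (simp add: mon_eval_def power_add prod.distrib)

lemma src_monom_zero [simp]: "src_monom I (\<lambda>_. 0) v = 1"
  by (simp add: src_monom_def)

lemma mon_eval_zero [simp]: "mon_eval m (\<lambda>_. 0) x = 1"
  by (simp add: mon_eval_def)

lemma mpoly_eval_Nil [simp]: "mpoly_eval I m [] v x = 0"
  by (simp add: mpoly_eval_def)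

lemma mpoly_eval_Cons [simp]:
  "mpoly_eval I m ((c, g, b) # p) v x = c * src_monom I g v * mon_eval m b x + mpoly_eval I m p v x"
  by (simp add: mpoly_eval_def)

lemma mpoly_eval_append [simp]:
  "mpoly_eval I m (p @ q) v x = mpoly_eval I m p v x + mpoly_eval I m q v x"
  by (simp add: mpoly_eval_def)

lemma mpoly_eval_concat:
  "mpoly_eval I m (concat ps) v x = (\<Sum>p\<leftarrow>ps. mpoly_eval I m p v x)"
  by (induction ps) auto

lemma mpoly_eval_mult [simp]:
  "mpoly_eval I m (mpoly_mult p q) v x = mpoly_eval I m p v x * mpoly_eval I m q v x"
proof (induction p)
  case Nil
  then show ?case by (simp add: mpoly_mult_def)
next
  case (Cons t p)
  obtain c g a where t: "t = (c, g, a)" by (cases t)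
  have "mpoly_eval I m [(c * d, \<lambda>s. g s + h s, \<lambda>j. a j + b j). (d, h, b) \<leftarrow> q] v x
      = c * src_monom I g v * mon_eval m a x * mpoly_eval I m q v x"
    by (induction q) (auto simp: src_monom_add mon_eval_add algebra_simps)
  then show ?case using Cons by (simp add: t mpoly_mult_def algebra_simps)
qed

lemma mpoly_eval_const [simp]: "mpoly_eval I m (mpoly_const c) v x = c"
  by (simp add: mpoly_const_def)

lemma mpoly_eval_var [simp]: "j < m \<Longrightarrow> mpoly_eval I m (mpoly_var j) v x = x j"
  by (simp add: mpoly_var_def mon_eval_def power_one_right if_distrib prod.delta cong: prod.cong if_cong)

lemma mpoly_eval_src [simp]: "finite I \<Longrightarrow> s \<in> I \<Longrightarrow> mpoly_eval I m (mpoly_src s) v x = v s"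
  by (simp add: mpoly_src_def src_monom_def if_distrib prod.delta cong: prod.cong if_cong)

lemma mpoly_eval_power [simp]: "mpoly_eval I m (mpoly_power p e) v x = mpoly_eval I m p v x ^ e"
  by (induction e) auto

lemma mpoly_eval_subst_monom:
  "mpoly_eval I m (mpoly_subst_monom e j a) v x = (\<Prod>l<j. mpoly_eval I m (e l) v x ^ a l)"
  by (induction j) auto

section \<open>Weighted degree\<close>

definition weight :: "nat \<Rightarrow> (nat \<Rightarrow> nat) \<Rightarrow> (nat \<Rightarrow> nat) \<Rightarrow> nat" where
  "weight m w b = (\<Sum>j<m. w j * b j)"

definition monoms_weight_le :: "nat \<Rightarrow> (nat \<Rightarrow> nat) \<Rightarrow> nat \<Rightarrow> (nat \<Rightarrow> nat) set" where
  "monoms_weight_le m w W = {b. (\<forall>j\<ge>m. b j = 0) \<and> weight m w b \<le> W}"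

definition mpoly_weight_le :: "nat \<Rightarrow> (nat \<Rightarrow> nat) \<Rightarrow> nat \<Rightarrow> 's mpoly \<Rightarrow> bool" where
  "mpoly_weight_le m w W p \<longleftrightarrow> (\<forall>t\<in>set p. snd (snd t) \<in> monoms_weight_le m w W)"

lemma weight_add: "weight m w (\<lambda>j. a j + b j) = weight m w a + weight m w b"
  by (simp add: weight_def algebra_simps sum.distrib)

lemma finite_monoms_weight_le:
  assumes "\<forall>j<m. 0 < w j"
  shows "finite (monoms_weight_le m w W)"
proof (rule finite_subset)
  show "finite {b. \<forall>j. (j \<in> {..<m} \<longrightarrow> b j \<in> {..W}) \<and> (j \<notin> {..<m} \<longrightarrow> b j = 0)}"
    by (intro finite_set_of_finite_funs) auto
  have "b j \<le> W" if b: "b \<in> monoms_weight_le m w W" and j: "j < m" for b j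
  proof -
    have "b j \<le> w j * b j" using assms j by (simp add: Suc_leI)
    also have "\<dots> \<le> weight m w b" unfolding weight_def using j by (intro member_le_sum) auto
    finally show ?thesis using b by (simp add: monoms_weight_le_def)
  qed
  then show "monoms_weight_le m w W \<subseteq>
      {b. \<forall>j. (j \<in> {..<m} \<longrightarrow> b j \<in> {..W}) \<and> (j \<notin> {..<m} \<longrightarrow> b j = 0)}"
    by (auto simp: monoms_weight_le_def)
qed

lemma mpoly_weight_le_mono: "mpoly_weight_le m w W p \<Longrightarrow> W \<le> W' \<Longrightarrow> mpoly_weight_le m w W' p"
  by (fastforce simp: mpoly_weight_le_def monoms_weight_le_def)

lemma mpoly_weight_le_Nil [simp]: "mpoly_weight_le m w W []"
  by (simp add: mpoly_weight_le_def)

lemma mpoly_weight_le_append [simp]: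
  "mpoly_weight_le m w W (p @ q) \<longleftrightarrow> mpoly_weight_le m w W p \<and> mpoly_weight_le m w W q"
  by (auto simp: mpoly_weight_le_def)

lemma mpoly_weight_le_concat:
  "(\<And>p. p \<in> set ps \<Longrightarrow> mpoly_weight_le m w W p) \<Longrightarrow> mpoly_weight_le m w W (concat ps)"
  by (induction ps) auto

lemma mpoly_weight_le_mult:
  "mpoly_weight_le m w W p \<Longrightarrow> mpoly_weight_le m w W' q \<Longrightarrow> mpoly_weight_le m w (W + W') (mpoly_mult p q)"
  by (fastforce simp: mpoly_weight_le_def monoms_weight_le_def mpoly_mult_def weight_add)

lemma mpoly_weight_le_mult_weightless:
  "mpoly_weight_le m w 0 p \<Longrightarrow> mpoly_weight_le m w W q \<Longrightarrow> mpoly_weight_le m w W (mpoly_mult p q)"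
  using mpoly_weight_le_mult[of m w 0 p W q] by simp

lemma mpoly_weight_le_const: "mpoly_weight_le m w W (mpoly_const c)"
  by (simp add: mpoly_weight_le_def monoms_weight_le_def mpoly_const_def weight_def)

lemma mpoly_weight_le_src: "mpoly_weight_le m w W (mpoly_src s)"
  by (simp add: mpoly_weight_le_def monoms_weight_le_def mpoly_src_def weight_def)

lemma mpoly_weight_le_var: "j < m \<Longrightarrow> mpoly_weight_le m w (w j) (mpoly_var j)"
  by (simp add: mpoly_weight_le_def monoms_weight_le_def mpoly_var_def weight_def
      if_distrib cong: sum.cong if_cong)

lemma mpoly_weight_le_power: "mpoly_weight_le m w W p \<Longrightarrow> mpoly_weight_le m w (e * W) (mpoly_power p e)"
  by (induction e) (auto simp: mpoly_weight_le_const dest: mpoly_weight_le_mult)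

lemma mpoly_weight_le_subst_monom:
  "(\<And>l. l < j \<Longrightarrow> mpoly_weight_le m w (w l) (e l)) \<Longrightarrow>
   mpoly_weight_le m w (\<Sum>l<j. a l * w l) (mpoly_subst_monom e j a)"
  by (induction j) (auto simp: mpoly_weight_le_const intro!: mpoly_weight_le_mult mpoly_weight_le_power)

lemma weighted_sum_le_power:
  fixes a :: "nat \<Rightarrow> nat"
  assumes "\<forall>l\<ge>i. a l = 0" and "(\<Sum>l<m. a l) \<le> D"
  shows "(\<Sum>l<m. a l * (D + 1) ^ l) \<le> (D + 1) ^ i"
proof (cases i)
  case 0
  then show ?thesis using assms by simp
next
  case (Suc i')
  have "a l * (D + 1) ^ l \<le> a l * (D + 1) ^ i'" for l
  proof (cases "l \<le> i'")
    case True
    then show ?thesis by (intro mult_left_mono power_increasing) simp_all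
  next
    case False
    then show ?thesis using assms Suc by simp
  qed
  then have "(\<Sum>l<m. a l * (D + 1) ^ l) \<le> (\<Sum>l<m. a l) * (D + 1) ^ i'"
    by (simp add: sum_distrib_right sum_mono)
  also have "\<dots> \<le> D * (D + 1) ^ i'"
    using assms(2) by (rule mult_right_mono) simp
  also have "\<dots> \<le> (D + 1) ^ i"
    using Suc by simp
  finally show ?thesis .
qed

section \<open>One loop iteration as a polynomial\<close>

datatype iter_src = Choice nat | Coeff nat bool nat

definition iter_srcs :: "probloop \<Rightarrow> iter_src set" where
  "iter_srcs L = Choice ` {..<nvars L} \<union> (\<Union>i<nvars L. \<Union>br. Coeff i br ` {..<length (pol L br i)})"

lemma finite_iter_srcs: "finite (iter_srcs L)"
  unfolding iter_srcs_def by (intro finite_UnI finite_UN_I) auto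

lemma Choice_in_iter_srcs: "i < nvars L \<Longrightarrow> Choice i \<in> iter_srcs L"
  by (auto simp: iter_srcs_def)

lemma Coeff_in_iter_srcs: "i < nvars L \<Longrightarrow> k < length (pol L br i) \<Longrightarrow> Coeff i br k \<in> iter_srcs L"
  by (auto simp: iter_srcs_def)

fun at_iter :: "nat \<Rightarrow> iter_src \<Rightarrow> ridx" where
  "at_iter n (Choice i) = Ch n i"
| "at_iter n (Coeff i br k) = Cf n i br k"

definition src_at :: "(nat \<Rightarrow> nat \<Rightarrow> 'a \<Rightarrow> bool) \<Rightarrow> (nat \<Rightarrow> nat \<Rightarrow> bool \<Rightarrow> nat \<Rightarrow> 'a \<Rightarrow> real)
    \<Rightarrow> nat \<Rightarrow> 'a \<Rightarrow> iter_src \<Rightarrow> real" where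
  "src_at B C n \<omega> s = src B C (at_iter n s) \<omega>"

definition branch_poly :: "probloop \<Rightarrow> bool \<Rightarrow> nat \<Rightarrow> (nat \<Rightarrow> iter_src mpoly) \<Rightarrow> iter_src mpoly" where
  "branch_poly L br i e =
     mpoly_mult (mpoly_const (if br then ca L i else cb L i)) (e i) @
     concat (map (\<lambda>k. mpoly_mult (mpoly_src (Coeff i br k))
                         (mpoly_subst_monom e (nvars L) (snd (pol L br i ! k))))
                 [0..<length (pol L br i)])"

text \<open>The source Choice i takes the value 1 on the first branch and 0 on the second.\<close>

definition update_poly :: "probloop \<Rightarrow> nat \<Rightarrow> (nat \<Rightarrow> iter_src mpoly) \<Rightarrow> iter_src mpoly" where
  "update_poly L i e =
     mpoly_mult (mpoly_src (Choice i)) (branch_poly L True i e) @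
     mpoly_mult (mpoly_const 1 @ mpoly_mult (mpoly_const (-1)) (mpoly_src (Choice i)))
       (branch_poly L False i e)"

fun body_poly :: "probloop \<Rightarrow> nat \<Rightarrow> nat \<Rightarrow> iter_src mpoly" where
  "body_poly L 0 = mpoly_var"
| "body_poly L (Suc i) = (body_poly L i)(i := update_poly L i (body_poly L i))"

definition step_poly :: "probloop \<Rightarrow> (nat \<Rightarrow> nat) \<Rightarrow> iter_src mpoly" where
  "step_poly L b = mpoly_subst_monom (body_poly L (nvars L)) (nvars L) b"

lemma mpoly_eval_branch_poly:
  assumes i: "i < nvars L"
    and e: "\<And>l. l < nvars L \<Longrightarrow> mpoly_eval (iter_srcs L) (nvars L) (e l) v x = t l"
  shows "mpoly_eval (iter_srcs L) (nvars L) (branch_poly L br i e) v x =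
    (if br then ca L i else cb L i) * t i + poly_eval (nvars L) (pol L br i) (\<lambda>k. v (Coeff i br k)) t"
proof -
  have subst: "mpoly_eval (iter_srcs L) (nvars L) (mpoly_subst_monom e (nvars L) a) v x =
      mon_eval (nvars L) a t" for a
    unfolding mpoly_eval_subst_monom mon_eval_def using e by (intro prod.cong) auto
  have "mpoly_eval (iter_srcs L) (nvars L)
      (concat (map (\<lambda>k. mpoly_mult (mpoly_src (Coeff i br k))
                         (mpoly_subst_monom e (nvars L) (snd (pol L br i ! k))))
                   [0..<length (pol L br i)])) v x =
    poly_eval (nvars L) (pol L br i) (\<lambda>k. v (Coeff i br k)) t"
    unfolding poly_eval_def mpoly_eval_concat map_map comp_def interv_sum_list_conv_sum_set_nat
    by (intro sum.cong) (simp_all add: subst i finite_iter_srcs Coeff_in_iter_srcs atLeast0LessThan)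
  then show ?thesis
    using e[OF i] by (simp add: branch_poly_def)
qed

lemma body_eq_mpoly_eval_body_poly:
  "i \<le> nvars L \<Longrightarrow> j < nvars L \<Longrightarrow>
   body L B C n \<omega> s i j = mpoly_eval (iter_srcs L) (nvars L) (body_poly L i j) (src_at B C n \<omega>) s"
proof (induction i arbitrary: j)
  case 0
  then show ?case by simp
next
  case (Suc i)
  let ?t = "body L B C n \<omega> s i"
  have i: "i < nvars L" using Suc by simp
  have IH: "\<And>l. l < nvars L \<Longrightarrow>
      mpoly_eval (iter_srcs L) (nvars L) (body_poly L i l) (src_at B C n \<omega>) s = ?t l"
    using Suc by simp
  have "mpoly_eval (iter_srcs L) (nvars L) (update_poly L i (body_poly L i)) (src_at B C n \<omega>) s =
    (if B n i \<omega>
     then ca L i * ?t i + poly_eval (nvars L) (polP L i) (\<lambda>k. C n i True k \<omega>) ?t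
     else cb L i * ?t i + poly_eval (nvars L) (polQ L i) (\<lambda>k. C n i False k \<omega>) ?t)"
    using mpoly_eval_branch_poly[OF i IH]
    by (simp add: update_poly_def finite_iter_srcs Choice_in_iter_srcs i pol_def src_at_def src_def)
  then show ?case
    using Suc.prems IH by (simp add: Let_def)
qed

lemma mon_eval_loop_state_Suc:
  "mon_eval (nvars L) b (loop_state L B C (Suc n) \<omega>) =
   mpoly_eval (iter_srcs L) (nvars L) (step_poly L b) (src_at B C n \<omega>) (loop_state L B C n \<omega>)"
  unfolding step_poly_def mpoly_eval_subst_monom mon_eval_def
  by (intro prod.cong refl) (simp add: body_eq_mpoly_eval_body_poly)

text \<open>A crude bound: any bound on the degrees of all monomials of the P_i and Q_i would do.\<close>

definition degree_bound :: "probloop \<Rightarrow> nat" where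
  "degree_bound L =
     (\<Sum>i<nvars L. \<Sum>br\<in>UNIV. \<Sum>k<length (pol L br i). \<Sum>l<nvars L. snd (pol L br i ! k) l)"

definition var_weight :: "probloop \<Rightarrow> nat \<Rightarrow> nat" where
  "var_weight L j = (degree_bound L + 1) ^ j"

lemma degree_le_degree_bound:
  assumes "i < nvars L" "k < length (pol L br i)"
  shows "(\<Sum>l<nvars L. snd (pol L br i ! k) l) \<le> degree_bound L"
proof -
  let ?deg = "\<lambda>i br k. \<Sum>l<nvars L. snd (pol L br i ! k) l"
  have "?deg i br k \<le> (\<Sum>k<length (pol L br i). ?deg i br k)"
    using assms by (intro member_le_sum) auto
  also have "\<dots> \<le> (\<Sum>br\<in>UNIV. \<Sum>k<length (pol L br i). ?deg i br k)"
    by (intro member_le_sum [where f = "\<lambda>br. \<Sum>k<length (pol L br i). ?deg i br k"]) auto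
  also have "\<dots> \<le> degree_bound L"
    unfolding degree_bound_def using assms
    by (intro member_le_sum [where f = "\<lambda>i. \<Sum>br\<in>UNIV. \<Sum>k<length (pol L br i). ?deg i br k"]) auto
  finally show ?thesis .
qed

lemma branch_poly_weight_le:
  assumes L: "prob_solvable L" and i: "i < nvars L"
    and e: "\<And>l. l < nvars L \<Longrightarrow> mpoly_weight_le (nvars L) (var_weight L) (var_weight L l) (e l)"
  shows "mpoly_weight_le (nvars L) (var_weight L) (var_weight L i) (branch_poly L br i e)"
proof -
  have "mpoly_weight_le (nvars L) (var_weight L) (var_weight L i)
      (mpoly_subst_monom e (nvars L) (snd (pol L br i ! k)))"
    if k: "k < length (pol L br i)" for k
  proof (rule mpoly_weight_le_mono[OF mpoly_weight_le_subst_monom[OF e]])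
    have "\<forall>l\<ge>i. snd (pol L br i ! k) l = 0"
      using L i k unfolding prob_solvable_def by blast
    then show "(\<Sum>l<nvars L. snd (pol L br i ! k) l * var_weight L l) \<le> var_weight L i"
      unfolding var_weight_def by (rule weighted_sum_le_power[OF _ degree_le_degree_bound[OF i k]])
  qed
  then show ?thesis
    unfolding branch_poly_def
    by (auto intro!: mpoly_weight_le_concat mpoly_weight_le_mult_weightless mpoly_weight_le_const
        mpoly_weight_le_src e[OF i])
qed

lemma body_poly_weight_le:
  assumes L: "prob_solvable L"
  shows "i \<le> nvars L \<Longrightarrow> j < nvars L \<Longrightarrow>
    mpoly_weight_le (nvars L) (var_weight L) (var_weight L j) (body_poly L i j)"
proof (induction i arbitrary: j)
  case 0
  then show ?case by (simp add: mpoly_weight_le_var)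
next
  case (Suc i)
  have i: "i < nvars L" using Suc by simp
  have IH: "\<And>l. l < nvars L \<Longrightarrow> mpoly_weight_le (nvars L) (var_weight L) (var_weight L l) (body_poly L i l)"
    using Suc by simp
  note branch = branch_poly_weight_le[OF L i IH]
  have "mpoly_weight_le (nvars L) (var_weight L) (var_weight L i) (update_poly L i (body_poly L i))"
    unfolding update_poly_def
    by (simp add: mpoly_weight_le_mult_weightless mpoly_weight_le_const mpoly_weight_le_src branch)
  then show ?case using Suc.prems IH by simp
qed

lemma step_poly_weight_le:
  "prob_solvable L \<Longrightarrow>
   mpoly_weight_le (nvars L) (var_weight L) (weight (nvars L) (var_weight L) b) (step_poly L b)"
  unfolding step_poly_def weight_def
  using mpoly_weight_le_subst_monom[of "nvars L" "nvars L" "var_weight L" "body_poly L (nvars L)" b]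
    body_poly_weight_le[of L "nvars L"]
  by (simp add: mult.commute)

lemma finite_monoms_var_weight_le: "finite (monoms_weight_le (nvars L) (var_weight L) W)"
  by (rule finite_monoms_weight_le) (simp add: var_weight_def)

section \<open>Independence of the fresh sources from the state\<close>

lemma body_cong:
  assumes "\<forall>i<nvars L. B n i \<omega> = B' n i \<omega>'"
    and "\<forall>i<nvars L. \<forall>br k. k < length (pol L br i) \<longrightarrow> C n i br k \<omega> = C' n i br k \<omega>'"
  shows "i \<le> nvars L \<Longrightarrow> body L B C n \<omega> s i = body L B' C' n \<omega>' s i"
proof (induction i)
  case 0
  then show ?case by simp
next
  case (Suc i)
  have i: "i < nvars L" using Suc by simp
  have "poly_eval (nvars L) (pol L br i) (\<lambda>k. C n i br k \<omega>) t =
        poly_eval (nvars L) (pol L br i) (\<lambda>k. C' n i br k \<omega>') t" for br t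
    unfolding poly_eval_def using assms(2) i by (auto intro!: sum.cong)
  from this[of True] this[of False] show ?case
    using Suc assms(1) i by (simp add: Let_def pol_def cong: if_cong)
qed

lemma loop_state_cong:
  assumes "\<forall>n'<n. \<forall>i<nvars L. B n' i \<omega> = B' n' i \<omega>' \<and>
              (\<forall>br k. k < length (pol L br i) \<longrightarrow> C n' i br k \<omega> = C' n' i br k \<omega>')"
  shows "loop_state L B C n \<omega> = loop_state L B' C' n \<omega>'"
  using assms
proof (induction n)
  case 0
  then show ?case by simp
next
  case (Suc n)
  then have "loop_state L B C n \<omega> = loop_state L B' C' n \<omega>'" by simp
  moreover have "body L B C n \<omega> s (nvars L) = body L B' C' n \<omega>' s (nvars L)" for s
    using Suc.prems by (intro body_cong) auto
  ultimately show ?case by simp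
qed

lemma body_measurable:
  assumes B: "\<forall>i<nvars L. {x\<in>space N. B n i x} \<in> sets N"
    and C: "\<forall>i<nvars L. \<forall>br k. k < length (pol L br i) \<longrightarrow> C n i br k \<in> borel_measurable N"
    and S: "\<forall>j. (\<lambda>x. S x j) \<in> borel_measurable N"
  shows "i \<le> nvars L \<Longrightarrow> \<forall>j. (\<lambda>x. body L B C n x (S x) i j) \<in> borel_measurable N"
proof (induction i)
  case 0
  then show ?case using S by simp
next
  case (Suc i)
  let ?t = "\<lambda>x. body L B C n x (S x) i"
  have i: "i < nvars L" using Suc by simp
  have IH: "\<And>j. (\<lambda>x. ?t x j) \<in> borel_measurable N" using Suc by simp
  have "(\<lambda>x. poly_eval (nvars L) (pol L br i) (\<lambda>k. C n i br k x) (?t x)) \<in> borel_measurable N" for br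
    unfolding poly_eval_def mon_eval_def using C i IH
    by (intro borel_measurable_sum borel_measurable_times borel_measurable_prod borel_measurable_power) auto
  from this[of True] this[of False]
  have "(\<lambda>x. if B n i x
      then ca L i * ?t x i + poly_eval (nvars L) (polP L i) (\<lambda>k. C n i True k x) (?t x)
      else cb L i * ?t x i + poly_eval (nvars L) (polQ L i) (\<lambda>k. C n i False k x) (?t x))
    \<in> borel_measurable N"
    using IH B i by (intro measurable_If borel_measurable_add borel_measurable_times) (auto simp: pol_def)
  then show ?case
    using IH by (auto simp: Let_def)
qed

fun iter_of :: "ridx \<Rightarrow> nat" where
  "iter_of (Ch n i) = n"
| "iter_of (Cf n i br k) = n"

definition srcs_before :: "probloop \<Rightarrow> nat \<Rightarrow> ridx set" where
  "srcs_before L n = {r \<in> src_idx L. iter_of r < n}"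

fun at_iter_inv :: "ridx \<Rightarrow> iter_src" where
  "at_iter_inv (Ch n i) = Choice i"
| "at_iter_inv (Cf n i br k) = Coeff i br k"

lemma at_iter_inv_at_iter [simp]: "at_iter_inv (at_iter n s) = s"
  by (cases s) auto

lemma inj_at_iter: "inj_on (at_iter n) A"
  by (rule inj_on_inverseI[where g = at_iter_inv]) simp

lemma iter_of_at_iter [simp]: "iter_of (at_iter n s) = n"
  by (cases s) auto

lemma at_iter_in_src_idx: "s \<in> iter_srcs L \<Longrightarrow> at_iter n s \<in> src_idx L"
  by (auto simp: iter_srcs_def src_idx_def)

text \<open>The loop driven by the coordinates of a point of the product space of all sources: this
  exhibits the state after n iterations as a measurable function of the sources of earlier
  iterations.\<close>

definition coord_choice :: "nat \<Rightarrow> nat \<Rightarrow> (ridx \<Rightarrow> real) \<Rightarrow> bool" where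
  "coord_choice n i v \<longleftrightarrow> v (Ch n i) \<noteq> 0"

definition coord_coeff :: "nat \<Rightarrow> nat \<Rightarrow> bool \<Rightarrow> nat \<Rightarrow> (ridx \<Rightarrow> real) \<Rightarrow> real" where
  "coord_coeff n i br k v = v (Cf n i br k)"

lemma loop_state_coord_measurable:
  "n \<le> n' \<Longrightarrow> (\<lambda>v. loop_state L coord_choice coord_coeff n v j)
     \<in> borel_measurable (PiM (srcs_before L n') (\<lambda>_. borel))"
proof (induction n arbitrary: j)
  case 0
  then show ?case by simp
next
  case (Suc n)
  let ?P = "PiM (srcs_before L n') (\<lambda>_. borel) :: (ridx \<Rightarrow> real) measure"
  have n: "n < n'" using Suc by simp
  have coord: "(\<lambda>v. v r) \<in> borel_measurable ?P" if "r \<in> srcs_before L n'" for r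
    using measurable_component_singleton[OF that, of "\<lambda>_. borel"] by simp
  have "\<forall>i<nvars L. {v\<in>space ?P. coord_choice n i v} \<in> sets ?P"
  proof (intro allI impI)
    fix i assume "i < nvars L"
    then have "Ch n i \<in> srcs_before L n'" using n by (auto simp: srcs_before_def src_idx_def)
    from coord[OF this] show "{v\<in>space ?P. coord_choice n i v} \<in> sets ?P"
      unfolding coord_choice_def by measurable
  qed
  moreover have "\<forall>i<nvars L. \<forall>br k. k < length (pol L br i) \<longrightarrow> coord_coeff n i br k \<in> borel_measurable ?P"
  proof (intro allI impI)
    fix i br k assume "i < nvars L" "k < length (pol L br i)"
    then have "Cf n i br k \<in> srcs_before L n'" using n by (auto simp: srcs_before_def src_idx_def)
    from coord[OF this] show "coord_coeff n i br k \<in> borel_measurable ?P"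
      unfolding coord_coeff_def .
  qed
  ultimately have "\<forall>j. (\<lambda>v. body L coord_choice coord_coeff n v (loop_state L coord_choice coord_coeff n v)
      (nvars L) j) \<in> borel_measurable ?P"
    using Suc n by (intro body_measurable) auto
  then show ?case by simp
qed

lemma loop_state_restrict_srcs_before:
  "loop_state L coord_choice coord_coeff n (restrict (\<lambda>r. src B C r \<omega>) (srcs_before L n)) =
   loop_state L B C n \<omega>"
proof (rule loop_state_cong, intro allI impI conjI)
  fix n' i br k assume n': "n' < n" and i: "i < nvars L"
  have "Ch n' i \<in> srcs_before L n" using n' i by (auto simp: srcs_before_def src_idx_def)
  then show "coord_choice n' i (restrict (\<lambda>r. src B C r \<omega>) (srcs_before L n)) = B n' i \<omega>"
    by (simp add: coord_choice_def src_def)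
  assume k: "k < length (pol L br i)"
  have "Cf n' i br k \<in> srcs_before L n" using n' i k by (auto simp: srcs_before_def src_idx_def)
  then show "coord_coeff n' i br k (restrict (\<lambda>r. src B C r \<omega>) (srcs_before L n)) = C n' i br k \<omega>"
    by (simp add: coord_coeff_def src_def)
qed

section \<open>Moment recurrences\<close>

lemma integrable_sum_list:
  fixes f :: "'t \<Rightarrow> 'a \<Rightarrow> real"
  shows "(\<And>t. t \<in> set xs \<Longrightarrow> integrable M (f t)) \<Longrightarrow> integrable M (\<lambda>\<omega>. \<Sum>t\<leftarrow>xs. f t \<omega>)"
  by (induction xs) auto

lemma integral_sum_list:
  fixes f :: "'t \<Rightarrow> 'a \<Rightarrow> real"
  shows "(\<And>t. t \<in> set xs \<Longrightarrow> integrable M (f t)) \<Longrightarrow>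
    (\<integral>\<omega>. (\<Sum>t\<leftarrow>xs. f t \<omega>) \<partial>M) = (\<Sum>t\<leftarrow>xs. \<integral>\<omega>. f t \<omega> \<partial>M)"
  by (induction xs) (auto simp: integrable_sum_list)

lemma sum_list_regroup:
  fixes f :: "'t \<Rightarrow> 'b::comm_semiring_1"
  assumes "finite S" and "\<And>x. x \<in> set xs \<Longrightarrow> h x \<in> S"
  shows "(\<Sum>x\<leftarrow>xs. f x * F (h x)) = (\<Sum>y\<in>S. (\<Sum>x\<leftarrow>xs. if h x = y then f x else 0) * F y)"
  using assms(2)
proof (induction xs)
  case Nil
  then show ?case by simp
next
  case (Cons x xs)
  have "(\<Sum>y\<in>S. (if h x = y then f x else 0) * F y) = (\<Sum>y\<in>S. if h x = y then f x * F y else 0)"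
    by (intro sum.cong) auto
  also have "\<dots> = f x * F (h x)"
    using Cons.prems assms(1) by simp
  finally have "(\<Sum>y\<in>S. (if h x = y then f x else 0) * F y) = f x * F (h x)" .
  then show ?case
    using Cons by (simp add: distrib_right sum.distrib)
qed

lemma (in prob_space) integral_power_of_bool:
  assumes A: "{\<omega> \<in> space M. P \<omega>} \<in> events"
  shows "integrable M (\<lambda>\<omega>. of_bool (P \<omega>) ^ e :: real)"
    and "(\<integral>\<omega>. of_bool (P \<omega>) ^ e \<partial>M) = (if e = 0 then 1 else prob {\<omega> \<in> space M. P \<omega>})"
proof -
  have eq: "of_bool (P \<omega>) ^ e = (if e = 0 then 1 else indicator {\<omega> \<in> space M. P \<omega>} \<omega> :: real)"
    if "\<omega> \<in> space M" for \<omega>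
    using that by (cases e) (auto simp: indicator_def)
  have "integrable M (\<lambda>\<omega>. if e = 0 then 1 else indicator {\<omega> \<in> space M. P \<omega>} \<omega> :: real)"
    using A by (cases "e = 0") (simp_all add: less_top[symmetric])
  then show "integrable M (\<lambda>\<omega>. of_bool (P \<omega>) ^ e :: real)"
    by (rule Bochner_Integration.integrable_cong[THEN iffD1, rotated 2]) (simp_all add: eq)
  have "(\<integral>\<omega>. of_bool (P \<omega>) ^ e \<partial>M) =
      (\<integral>\<omega>. (if e = 0 then 1 else indicator {\<omega> \<in> space M. P \<omega>} \<omega> :: real) \<partial>M)"
    by (intro Bochner_Integration.integral_cong) (simp_all add: eq)
  also have "\<dots> = (if e = 0 then 1 else prob {\<omega> \<in> space M. P \<omega>})"
    using A by (cases "e = 0") (simp_all add: prob_space)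
  finally show "(\<integral>\<omega>. of_bool (P \<omega>) ^ e \<partial>M) = (if e = 0 then 1 else prob {\<omega> \<in> space M. P \<omega>})" .
qed

fun src_moment :: "probloop \<Rightarrow> iter_src \<Rightarrow> nat \<Rightarrow> real" where
  "src_moment L (Choice i) e = (if e = 0 then 1 else pr L i)"
| "src_moment L (Coeff i br k) e = (\<integral>x. x ^ e \<partial>(fst (pol L br i ! k)))"

definition src_monom_moment :: "probloop \<Rightarrow> (iter_src \<Rightarrow> nat) \<Rightarrow> real" where
  "src_monom_moment L g = (\<Prod>s\<in>iter_srcs L. src_moment L s (g s))"

definition recurrence_coeff :: "probloop \<Rightarrow> (nat \<Rightarrow> nat) \<Rightarrow> (nat \<Rightarrow> nat) \<Rightarrow> real" where
  "recurrence_coeff L b b' =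
     (\<Sum>(c, g, b'')\<leftarrow>step_poly L b. if b'' = b' then c * src_monom_moment L g else 0)"

locale prob_loop = prob_space M for M :: "'a measure" +
  fixes L :: probloop
    and B :: "nat \<Rightarrow> nat \<Rightarrow> 'a \<Rightarrow> bool"
    and C :: "nat \<Rightarrow> nat \<Rightarrow> bool \<Rightarrow> nat \<Rightarrow> 'a \<Rightarrow> real"
  assumes solvable: "prob_solvable L"
    and sources: "loop_sources M L B C"
begin

lemma indep_srcs: "indep_vars (\<lambda>_. borel) (src B C) (src_idx L)"
  using sources by (simp add: loop_sources_def)

lemma src_power_integral:
  assumes s: "s \<in> iter_srcs L"
  shows "integrable M (\<lambda>\<omega>. src_at B C n \<omega> s ^ e)"
    and "(\<integral>\<omega>. src_at B C n \<omega> s ^ e \<partial>M) = src_moment L s e"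
proof -
  have rv: "(\<lambda>\<omega>. src_at B C n \<omega> s) \<in> borel_measurable M"
    using indep_srcs at_iter_in_src_idx[OF s] by (auto simp: indep_vars_def src_at_def)
  have "integrable M (\<lambda>\<omega>. src_at B C n \<omega> s ^ e) \<and>
        (\<integral>\<omega>. src_at B C n \<omega> s ^ e \<partial>M) = src_moment L s e"
  proof (cases s)
    case (Choice i)
    have i: "i < nvars L" using s Choice by (auto simp: iter_srcs_def)
    have "(\<lambda>\<omega>. of_bool (B n i \<omega>) :: real) \<in> borel_measurable M"
      using rv Choice by (simp add: src_at_def src_def)
    then have "(\<lambda>\<omega>. of_bool (B n i \<omega>) :: real) -` {1} \<inter> space M \<in> events"
      by measurable
    moreover have "(\<lambda>\<omega>. of_bool (B n i \<omega>) :: real) -` {1} \<inter> space M = {\<omega> \<in> space M. B n i \<omega>}"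
      by auto
    ultimately have "{\<omega> \<in> space M. B n i \<omega>} \<in> events" by simp
    moreover have "prob {\<omega> \<in> space M. B n i \<omega>} = pr L i"
      using sources i by (simp add: loop_sources_def)
    ultimately show ?thesis
      using integral_power_of_bool Choice by (simp add: src_at_def src_def)
  next
    case (Coeff i br k)
    have ik: "i < nvars L" "k < length (pol L br i)" using s Coeff by (auto simp: iter_srcs_def)
    have rvC: "C n i br k \<in> borel_measurable M" using rv Coeff by (simp add: src_at_def src_def)
    have distr: "distr M borel (C n i br k) = fst (pol L br i ! k)"
      using sources ik by (simp add: loop_sources_def)
    have "integrable (fst (pol L br i ! k)) (\<lambda>x. x ^ e)"
      using solvable ik by (simp add: prob_solvable_def)
    then show ?thesis
      using integrable_distr_eq[OF rvC, of "\<lambda>x. x ^ e"] integral_distr[OF rvC, of "\<lambda>x. x ^ e"] distr Coeff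
      by (simp add: src_at_def src_def)
  qed
  then show "integrable M (\<lambda>\<omega>. src_at B C n \<omega> s ^ e)"
    and "(\<integral>\<omega>. src_at B C n \<omega> s ^ e \<partial>M) = src_moment L s e" by auto
qed

lemma src_monom_integral:
  shows "integrable M (\<lambda>\<omega>. src_monom (iter_srcs L) g (src_at B C n \<omega>))"
    and "(\<integral>\<omega>. src_monom (iter_srcs L) g (src_at B C n \<omega>) \<partial>M) = src_monom_moment L g"
proof -
  let ?K = "at_iter n ` iter_srcs L"
  have eq: "src_monom (iter_srcs L) g (src_at B C n \<omega>) = (\<Prod>r\<in>?K. src B C r \<omega> ^ g (at_iter_inv r))" for \<omega>
    unfolding src_monom_def src_at_def by (subst prod.reindex[OF inj_at_iter]) simp
  have indep: "indep_vars (\<lambda>_. borel) (\<lambda>r \<omega>. src B C r \<omega> ^ g (at_iter_inv r)) ?K"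
    using at_iter_in_src_idx
    by (intro indep_vars_compose2[OF indep_vars_subset[OF indep_srcs]]) auto
  have int: "integrable M (\<lambda>\<omega>. src B C r \<omega> ^ g (at_iter_inv r))" if "r \<in> ?K" for r
    using that src_power_integral(1) by (auto simp: src_at_def)
  show "integrable M (\<lambda>\<omega>. src_monom (iter_srcs L) g (src_at B C n \<omega>))"
    unfolding eq by (rule indep_vars_integrable[OF _ indep int]) (simp_all add: finite_iter_srcs)
  have "(\<integral>\<omega>. src_monom (iter_srcs L) g (src_at B C n \<omega>) \<partial>M) =
      (\<Prod>r\<in>?K. \<integral>\<omega>. src B C r \<omega> ^ g (at_iter_inv r) \<partial>M)"
    unfolding eq by (rule indep_vars_lebesgue_integral[OF _ indep int]) (simp_all add: finite_iter_srcs)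
  also have "\<dots> = (\<Prod>s\<in>iter_srcs L. \<integral>\<omega>. src_at B C n \<omega> s ^ g s \<partial>M)"
    by (subst prod.reindex[OF inj_at_iter]) (simp add: src_at_def)
  also have "\<dots> = src_monom_moment L g"
    unfolding src_monom_moment_def using src_power_integral(2) by (intro prod.cong) auto
  finally show "(\<integral>\<omega>. src_monom (iter_srcs L) g (src_at B C n \<omega>) \<partial>M) = src_monom_moment L g" .
qed

lemma indep_src_monom_loop_state:
  "indep_var borel (\<lambda>\<omega>. src_monom (iter_srcs L) g (src_at B C n \<omega>))
             borel (\<lambda>\<omega>. mon_eval (nvars L) b (loop_state L B C n \<omega>))"
proof -
  let ?K = "at_iter n ` iter_srcs L"
  let ?P = "srcs_before L n"
  let ?restr = "\<lambda>I \<omega>. restrict (\<lambda>r. src B C r \<omega>) I"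
  have "?K \<subseteq> src_idx L" using at_iter_in_src_idx by blast
  moreover have "?P \<subseteq> src_idx L" by (auto simp: srcs_before_def)
  moreover have "?K \<inter> ?P = {}" by (auto simp: srcs_before_def)
  ultimately have "indep_var (PiM ?K (\<lambda>_. borel)) (?restr ?K) (PiM ?P (\<lambda>_. borel)) (?restr ?P)"
    by (intro indep_var_restrict[OF indep_srcs])
  moreover have "(\<lambda>v. \<Prod>s\<in>iter_srcs L. v (at_iter n s) ^ g s :: real) \<in> borel_measurable (PiM ?K (\<lambda>_. borel))"
  proof (intro borel_measurable_prod borel_measurable_power)
    fix s assume "s \<in> iter_srcs L"
    then show "(\<lambda>v. v (at_iter n s)) \<in> borel_measurable (PiM ?K (\<lambda>_. borel))"
      using measurable_component_singleton[of "at_iter n s" ?K "\<lambda>_. borel"] by simp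
  qed
  moreover have "(\<lambda>v. mon_eval (nvars L) b (loop_state L coord_choice coord_coeff n v))
      \<in> borel_measurable (PiM ?P (\<lambda>_. borel))"
    unfolding mon_eval_def
    by (intro borel_measurable_prod borel_measurable_power loop_state_coord_measurable) auto
  ultimately have "indep_var
      borel ((\<lambda>v. \<Prod>s\<in>iter_srcs L. v (at_iter n s) ^ g s) \<circ> ?restr ?K)
      borel ((\<lambda>v. mon_eval (nvars L) b (loop_state L coord_choice coord_coeff n v)) \<circ> ?restr ?P)"
    by (rule indep_var_compose)
  then show ?thesis
    by (simp add: comp_def src_monom_def src_at_def loop_state_restrict_srcs_before)
qed

lemma integrable_src_monom_mult:
  "integrable M (\<lambda>\<omega>. mon_eval (nvars L) b (loop_state L B C n \<omega>)) \<Longrightarrow>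
   integrable M (\<lambda>\<omega>. src_monom (iter_srcs L) g (src_at B C n \<omega>) *
     mon_eval (nvars L) b (loop_state L B C n \<omega>))"
  by (rule indep_var_integrable[OF indep_src_monom_loop_state src_monom_integral(1)])

lemma integrable_mon_eval_loop_state:
  "integrable M (\<lambda>\<omega>. mon_eval (nvars L) b (loop_state L B C n \<omega>))"
proof (induction n arbitrary: b)
  case 0
  then show ?case by simp
next
  case (Suc n)
  have "integrable M (\<lambda>\<omega>. c * (src_monom (iter_srcs L) g (src_at B C n \<omega>) *
      mon_eval (nvars L) b' (loop_state L B C n \<omega>)))" for c g b'
    by (intro integrable_mult_right integrable_src_monom_mult Suc.IH)
  then show ?case
    unfolding mon_eval_loop_state_Suc mpoly_eval_def case_prod_unfold
    by (intro integrable_sum_list) (simp add: mult.assoc)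
qed

lemma Evar_Suc:
  "Evar M L B C b (Suc n) =
   (\<Sum>(c, g, b')\<leftarrow>step_poly L b. c * src_monom_moment L g * Evar M L B C b' n)"
proof -
  have "(\<integral>\<omega>. c * src_monom (iter_srcs L) g (src_at B C n \<omega>) *
      mon_eval (nvars L) b' (loop_state L B C n \<omega>) \<partial>M) = c * src_monom_moment L g * Evar M L B C b' n"
    for c g b'
    using indep_var_lebesgue_integral[OF indep_src_monom_loop_state src_monom_integral(1)
        integrable_mon_eval_loop_state]
    by (simp add: mult.assoc src_monom_integral(2) Evar_def)
  moreover have "integrable M (\<lambda>\<omega>. c * src_monom (iter_srcs L) g (src_at B C n \<omega>) *
      mon_eval (nvars L) b' (loop_state L B C n \<omega>))" for c g b'
    unfolding mult.assoc
    by (intro integrable_mult_right integrable_src_monom_mult integrable_mon_eval_loop_state)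
  ultimately show ?thesis
    unfolding Evar_def mon_eval_loop_state_Suc mpoly_eval_def case_prod_unfold
    by (subst integral_sum_list) simp_all
qed

lemma Evar_Suc_linear:
  assumes b: "b \<in> monoms_weight_le (nvars L) (var_weight L) W"
  shows "Evar M L B C b (Suc n) =
    (\<Sum>b'\<in>monoms_weight_le (nvars L) (var_weight L) W. recurrence_coeff L b b' * Evar M L B C b' n)"
proof -
  have "weight (nvars L) (var_weight L) b \<le> W"
    using b by (simp add: monoms_weight_le_def)
  then have "mpoly_weight_le (nvars L) (var_weight L) W (step_poly L b)"
    by (rule mpoly_weight_le_mono[OF step_poly_weight_le[OF solvable]])
  then have "\<And>t. t \<in> set (step_poly L b) \<Longrightarrow> snd (snd t) \<in> monoms_weight_le (nvars L) (var_weight L) W"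
    by (simp add: mpoly_weight_le_def)
  then show ?thesis
    unfolding Evar_Suc recurrence_coeff_def case_prod_unfold
    using sum_list_regroup[OF finite_monoms_var_weight_le, where xs = "step_poly L b"
        and h = "\<lambda>t. snd (snd t)" and f = "\<lambda>t. fst t * src_monom_moment L (fst (snd t))"
        and F = "\<lambda>b'. Evar M L B C b' n"]
    by simp
qed

end

theorem mainTheorem1:
  fixes M :: "'a measure" and L :: probloop
    and B :: "nat \<Rightarrow> nat \<Rightarrow> 'a \<Rightarrow> bool" and C :: "nat \<Rightarrow> nat \<Rightarrow> bool \<Rightarrow> nat \<Rightarrow> 'a \<Rightarrow> real"
    and \<alpha> :: "nat \<Rightarrow> nat"
  assumes "prob_space M"
    and "prob_solvable L"
    and "loop_sources M L B C"
    and "\<forall>j \<ge> nvars L. \<alpha> j = 0"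
  shows "\<exists>S :: (nat \<Rightarrow> nat) set. finite S \<and> \<alpha> \<in> S \<and>
           (\<forall>\<beta>\<in>S. \<forall>j \<ge> nvars L. \<beta> j = 0) \<and>
           (\<forall>\<beta>\<in>S. \<forall>n. integrable M (\<lambda>\<omega>. mon_eval (nvars L) \<beta> (loop_state L B C n \<omega>))) \<and>
           (\<exists>c :: (nat \<Rightarrow> nat) \<Rightarrow> (nat \<Rightarrow> nat) \<Rightarrow> real. \<exists>d :: (nat \<Rightarrow> nat) \<Rightarrow> real.
              \<forall>\<beta>\<in>S. \<forall>n. Evar M L B C \<beta> (Suc n) = (\<Sum>\<beta>'\<in>S. c \<beta> \<beta>' * Evar M L B C \<beta>' n) + d \<beta>)"
proof -
  interpret prob_loop M L B C
    using assms(1-3) by (simp add: prob_loop_def prob_loop_axioms_def)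
  let ?S = "monoms_weight_le (nvars L) (var_weight L) (weight (nvars L) (var_weight L) \<alpha>)"
  have "\<alpha> \<in> ?S"
    using assms(4) by (simp add: monoms_weight_le_def)
  moreover have "\<forall>\<beta>\<in>?S. \<forall>j \<ge> nvars L. \<beta> j = 0"
    by (simp add: monoms_weight_le_def)
  \<comment> \<open>no inhomogeneous part is needed: the constant monomial belongs to the set\<close>
  moreover have "\<forall>\<beta>\<in>?S. \<forall>n. Evar M L B C \<beta> (Suc n) =
      (\<Sum>\<beta>'\<in>?S. recurrence_coeff L \<beta> \<beta>' * Evar M L B C \<beta>' n) + 0"
    using Evar_Suc_linear by simp
  ultimately show ?thesis
    using finite_monoms_var_weight_le integrable_mon_eval_loop_state
    by (intro exI[of _ ?S] exI[of _ "recurrence_coeff L"] exI[of _ "\<lambda>_. 0"] conjI) auto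
qed

end
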